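(* For all integers $j,\ell\ge 0$, $\theta\in\mathbb{R}$ and $t>0$, \[ \mathbb{P} \left(| \Psi_{j+\ell} (\theta) - \Psi_j (\theta) - \ell \theta | \geq t \,\middle|\, \mathcal{F}_j \right) \leq 2 \exp \left( - \frac{t^2 \beta}{8 \log \left(1 + \frac{\beta \ell}{1 + \beta j} \right)}\right). \]
   Context: Fix $\beta>0$. Let $(\boldsymbol{\alpha}_j)_{j\ge0}$ be independent complex random variables, each with law invariant under multiplication by complex numbers of modulus one, with $|\boldsymbol{\alpha}_j|^2$ having the Beta$(1,\frac{\beta}{2}(j+1))$ law, i.e. density $\frac{\beta(j+1)}{2}(1-x)^{\frac{\beta}{2}(j+1)-1}$ on $[0,1]$. Define recursively $\Psi_j(\theta)=(j+1)\theta-2\sum_{r=0}^{j-1}\Im\log\big(1-\boldsymbol{\alpha}_r\mathrm{e}^{\mathrm{i}\Psi_r(\theta)}\big)$ (principal branch of the logarithm). $\mathcal{F}_j$ is the $\sigma$-algebra generated by $(\boldsymbol{\alpha}_r)_{0\le r\le j-1}$. *)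

theory Defs
  imports "HOL-Probability.Probability"
begin

function Psi :: "(nat \<Rightarrow> complex) \<Rightarrow> nat \<Rightarrow> real \<Rightarrow> real" where
  "Psi a j \<theta> = real (j + 1) * \<theta>
      - 2 * (\<Sum>r\<in>{..<j}. Im (Ln (1 - a r * exp (\<i> * complex_of_real (Psi a r \<theta>)))))"
  by auto
termination by (relation "Wellfounded.measure (\<lambda>(a, j, \<theta>). j)") auto

declare Psi.simps [simp del]

definition filt :: "'w measure \<Rightarrow> (nat \<Rightarrow> 'w \<Rightarrow> complex) \<Rightarrow> nat \<Rightarrow> 'w measure" where
  "filt M \<alpha> j = sigma (space M)
     (\<Union>r\<in>{..<j}. {(\<alpha> r) -` A \<inter> space M | A. A \<in> sets (borel :: complex measure)})"

end

theory Submission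
  imports Defs "HOL-Real_Asymp.Real_Asymp" "HOL-Complex_Analysis.Cauchy_Integral_Theorem"
begin

(* The deviation Psi_{j+l} - Psi_j - l theta is the sum over j <= r < j + l of the increments
   g(alpha_r e^{i Psi_r}), where g(z) = -2 Im Ln(1 - z). Since alpha_r is rotation invariant and
   independent of F_r, which determines Psi_r, the conditional exponential moments factorise:
   E[exp(s (Psi_{j+l} - Psi_j - l theta)) | F_j] = prod_r E[exp(s g(alpha_r))].
   For |z| < 1 one has exp(s g(z)) = |(1 - z)^{i s}|^2; expanding (1 - z)^{i s} in powers of z and
   using that the mixed moments E[Z^k conj(Z)^m] of a rotation invariant Z vanish for k ~= m, the
   factor for alpha_r becomes the Gauss series 2F1(i s, -i s; a + 1; 1) with a = beta (r + 1) / 2,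
   i.e. prod_n (1 + s^2 / (a + 1 + n)^2) <= exp(s^2 / (a + 1/2)). Comparing the resulting sum over r
   with a logarithm and optimising the Chernoff bound in s gives the estimate. *)

section \<open>A Gauss hypergeometric series at 1\<close>

(* gauss_term y c k is the k-th term of 2F1(i y, -i y; c; 1). *)
definition gauss_term :: "real \<Rightarrow> real \<Rightarrow> nat \<Rightarrow> real" where
  "gauss_term y c k = (\<Prod>m<k. (real m)\<^sup>2 + y\<^sup>2) / (fact k * pochhammer c k)"

lemma gauss_term_nonneg: "c > 0 \<Longrightarrow> gauss_term y c k \<ge> 0"
  unfolding gauss_term_def by (intro divide_nonneg_pos prod_nonneg) (auto simp: pochhammer_pos)

lemma gauss_term_Suc:
  "c > 0 \<Longrightarrow>
    gauss_term y c (Suc k) = gauss_term y c k * ((real k)\<^sup>2 + y\<^sup>2) / ((real k + 1) * (c + real k))"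
  using pochhammer_pos[of c k] by (simp add: gauss_term_def pochhammer_Suc field_simps)

lemma gauss_term_plus_1:
  assumes "c > 0"
  shows "gauss_term y (c + 1) k = gauss_term y c k * c / (c + real k)"
proof -
  have "c * pochhammer (c + 1) k = pochhammer c k * (c + real k)"
    by (metis pochhammer_Suc pochhammer_rec)
  then have "pochhammer (c + 1) k = pochhammer c k * (c + real k) / c"
    using assms by (simp add: field_simps)
  then show ?thesis
    using assms pochhammer_pos[of c k] by (simp add: gauss_term_def)
qed

lemma gauss_term_contiguity:
  assumes "c > 0"
  shows "c\<^sup>2 * (\<Sum>k<n. gauss_term y c k) - (c\<^sup>2 + y\<^sup>2) * (\<Sum>k<n. gauss_term y (c + 1) k)
           = - c * real n * gauss_term y c n"
proof (induction n)
  case (Suc n)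
  define T where "T = gauss_term y c n"
  define d where "d = c + real n"
  have "d > 0" using assms by (simp add: d_def)
  then have "c\<^sup>2 * T - (c\<^sup>2 + y\<^sup>2) * (T * c / d) = - c * (T * ((real n)\<^sup>2 + y\<^sup>2) / d) + c * real n * T"
    by (simp add: field_simps power2_eq_square) (simp add: d_def algebra_simps)
  moreover have "real (Suc n) * gauss_term y c (Suc n) = T * ((real n)\<^sup>2 + y\<^sup>2) / d"
    using \<open>d > 0\<close> unfolding gauss_term_Suc[OF assms] T_def by (simp add: d_def add.commute)
  ultimately have "c\<^sup>2 * gauss_term y c n - (c\<^sup>2 + y\<^sup>2) * gauss_term y (c + 1) n
      = - c * real (Suc n) * gauss_term y c (Suc n) + c * real n * gauss_term y c n"
    unfolding gauss_term_plus_1[OF assms] T_def d_def by (simp add: mult.assoc)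
  with Suc show ?case by (simp add: algebra_simps)
qed simp

lemma sum_gauss_term_le_plus_1:
  assumes "c > 0"
  shows "(\<Sum>k<n. gauss_term y c k) \<le> (1 + y\<^sup>2 / c\<^sup>2) * (\<Sum>k<n. gauss_term y (c + 1) k)"
proof -
  have "0 \<le> c * real n * gauss_term y c n"
    using assms gauss_term_nonneg[OF assms] by simp
  then have "c\<^sup>2 * (\<Sum>k<n. gauss_term y c k) \<le> (c\<^sup>2 + y\<^sup>2) * (\<Sum>k<n. gauss_term y (c + 1) k)"
    using gauss_term_contiguity[OF assms, of y n] by linarith
  then show ?thesis using assms by (simp add: field_simps)
qed

lemma sum_gauss_term_le_prod_shift:
  assumes "c > 0"
  shows "(\<Sum>k<n. gauss_term y c k)
           \<le> (\<Prod>i<m. 1 + y\<^sup>2 / (c + real i)\<^sup>2) * (\<Sum>k<n. gauss_term y (c + real m) k)"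
proof (induction m)
  case (Suc m)
  have "c + real m > 0" using assms by simp
  from sum_gauss_term_le_plus_1[OF this, where n = n and y = y]
  have "(\<Prod>i<m. 1 + y\<^sup>2 / (c + real i)\<^sup>2) * (\<Sum>k<n. gauss_term y (c + real m) k)
      \<le> (\<Prod>i<Suc m. 1 + y\<^sup>2 / (c + real i)\<^sup>2) * (\<Sum>k<n. gauss_term y (c + real (Suc m)) k)"
    by (simp add: mult_left_mono prod_nonneg add_ac mult.assoc)
  with Suc.IH show ?case by linarith
qed simp

lemma sum_inverse_square_le:
  assumes "c > 1/2"
  shows "(\<Sum>i<m. 1 / (c + real i)\<^sup>2) \<le> 1 / (c - 1/2) - 1 / (c + real m - 1/2)"
proof (induction m)
  case (Suc m)
  define x where "x = c + real m"
  have x: "x > 1/2" using assms by (simp add: x_def)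
  have "1 / (x - 1/2) - 1 / (x + 1/2) = 1 / (x\<^sup>2 - 1/4)"
    using x by (simp add: field_simps power2_eq_square)
  moreover have "1 / x\<^sup>2 \<le> 1 / (x\<^sup>2 - 1/4)"
  proof (rule divide_left_mono)
    have "x * x > 1/2 * (1/2)" using x by (intro mult_strict_mono) auto
    then show "0 < x\<^sup>2 * (x\<^sup>2 - 1/4)" by (simp add: power2_eq_square)
  qed auto
  ultimately have "1 / (c + real m)\<^sup>2 \<le> 1 / (c + real m - 1/2) - 1 / (c + real (Suc m) - 1/2)"
    by (simp add: x_def algebra_simps)
  with Suc show ?case by simp
qed simp

lemma prod_one_plus_inverse_square_le_exp:
  assumes "c > 1/2"
  shows "(\<Prod>i<m. 1 + y\<^sup>2 / (c + real i)\<^sup>2) \<le> exp (y\<^sup>2 / (c - 1/2))"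
proof -
  have "(\<Prod>i<m. 1 + y\<^sup>2 / (c + real i)\<^sup>2) \<le> (\<Prod>i<m. exp (y\<^sup>2 / (c + real i)\<^sup>2))"
    by (intro prod_mono conjI add_nonneg_nonneg exp_ge_add_one_self) auto
  also have "\<dots> = exp (y\<^sup>2 * (\<Sum>i<m. 1 / (c + real i)\<^sup>2))"
    by (simp add: exp_sum sum_distrib_left)
  also have "\<dots> \<le> exp (y\<^sup>2 / (c - 1/2))"
  proof -
    have "(\<Sum>i<m. 1 / (c + real i)\<^sup>2) \<le> 1 / (c - 1/2)"
    proof -
      have "0 < 1 / (c + real m - 1/2)" using assms by simp
      then show ?thesis using sum_inverse_square_le[OF assms, of m] by linarith
    qed
    then have "y\<^sup>2 * (\<Sum>i<m. 1 / (c + real i)\<^sup>2) \<le> y\<^sup>2 * (1 / (c - 1/2))"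
      by (intro mult_left_mono) auto
    then show ?thesis by simp
  qed
  finally show ?thesis .
qed

lemma pochhammer_ge_1: "(x::real) \<ge> 1 \<Longrightarrow> pochhammer x k \<ge> 1"
proof (induction k)
  case (Suc k)
  then have "1 * 1 \<le> pochhammer x k * (x + real k)" by (intro mult_mono) auto
  then show ?case by (simp add: pochhammer_Suc)
qed simp

lemma gauss_term_shift_tendsto:
  assumes "c > 0"
  shows "(\<lambda>m. gauss_term y (c + real m) k) \<longlonglongrightarrow> (if k = 0 then 1 else 0)"
proof (cases k)
  case (Suc k')
  define P where "P = (\<Prod>m<k. (real m)\<^sup>2 + y\<^sup>2) / fact k"
  have bound: "gauss_term y x k \<le> P / x" if "x \<ge> 1" for x
  proof -
    have "pochhammer x k = x * pochhammer (x + 1) k'"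
      using Suc by (simp add: pochhammer_rec)
    also have "\<dots> \<ge> x" using pochhammer_ge_1[of "x + 1" k'] that by simp
    finally have "pochhammer x k \<ge> x" .
    moreover have "P \<ge> 0" unfolding P_def by (intro divide_nonneg_pos prod_nonneg) auto
    ultimately have "P / pochhammer x k \<le> P / x"
      using that by (intro divide_left_mono) auto
    then show ?thesis by (simp only: gauss_term_def P_def divide_divide_eq_left)
  qed
  have "eventually (\<lambda>m. c + real m \<ge> 1) sequentially" by real_asymp
  then have upper: "eventually (\<lambda>m. gauss_term y (c + real m) k \<le> P / (c + real m)) sequentially"
    by (rule eventually_mono) (rule bound)
  have lower: "eventually (\<lambda>m. 0 \<le> gauss_term y (c + real m) k) sequentially"
    using assms by (intro always_eventually allI gauss_term_nonneg) simp
  have "(\<lambda>m. P / (c + real m)) \<longlonglongrightarrow> 0" by real_asymp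
  from tendsto_sandwich[OF lower upper tendsto_const this] show ?thesis
    using Suc by simp
qed (simp add: gauss_term_def)

(* Iterating the contiguity relation moves c to c + m at the cost of the factor
   prod_{i<m} (1 + y^2 / (c + i)^2); as m tends to infinity all terms but the first vanish. *)
lemma sum_gauss_term_le_exp:
  assumes "c > 1/2"
  shows "(\<Sum>k<n. gauss_term y c k) \<le> exp (y\<^sup>2 / (c - 1/2))"
proof -
  define B where "B = exp (y\<^sup>2 / (c - 1/2))"
  have "(\<Sum>k<n. gauss_term y c k) \<le> B * (\<Sum>k<n. gauss_term y (c + real m) k)" for m
  proof -
    have "(\<Sum>k<n. gauss_term y c k)
        \<le> (\<Prod>i<m. 1 + y\<^sup>2 / (c + real i)\<^sup>2) * (\<Sum>k<n. gauss_term y (c + real m) k)"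
      using assms by (intro sum_gauss_term_le_prod_shift) simp
    also have "\<dots> \<le> B * (\<Sum>k<n. gauss_term y (c + real m) k)"
      unfolding B_def using assms
      by (intro mult_right_mono prod_one_plus_inverse_square_le_exp sum_nonneg gauss_term_nonneg) auto
    finally show ?thesis .
  qed
  moreover have "(\<lambda>m. B * (\<Sum>k<n. gauss_term y (c + real m) k))
      \<longlonglongrightarrow> B * (\<Sum>k<n. if k = 0 then 1 else 0)"
    using assms by (intro tendsto_mult tendsto_const tendsto_sum gauss_term_shift_tendsto) simp
  ultimately have "(\<Sum>k<n. gauss_term y c k) \<le> B * (\<Sum>k<n. if k = 0 then 1 else (0::real))"
    by (intro LIMSEQ_le_const) auto
  also have "\<dots> \<le> B" by (cases n) (auto simp: B_def)
  finally show ?thesis unfolding B_def .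
qed

section \<open>Exponential moments of a rotation invariant Beta variable\<close>

definition binom_imag_coeff :: "real \<Rightarrow> nat \<Rightarrow> complex" where
  "binom_imag_coeff y k = (-1) ^ k * ((\<i> * complex_of_real y) gchoose k)"

lemma norm_binom_imag_coeff_sq:
  "(cmod (binom_imag_coeff y k))\<^sup>2 = (\<Prod>m<k. (real m)\<^sup>2 + y\<^sup>2) / (fact k)\<^sup>2"
proof -
  have "(\<i> * complex_of_real y) gchoose k = (\<Prod>m=0..<k. \<i> * complex_of_real y - of_nat m) / fact k"
    by (rule gbinomial_prod_rev)
  then have "cmod (binom_imag_coeff y k) = (\<Prod>m<k. cmod (\<i> * complex_of_real y - of_nat m)) / fact k"
    by (simp add: binom_imag_coeff_def norm_mult norm_divide prod_norm[symmetric] atLeast0LessThan norm_power)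
  moreover have "(cmod (\<i> * complex_of_real y - of_nat m))\<^sup>2 = (real m)\<^sup>2 + y\<^sup>2" for m
    by (simp add: cmod_power2)
  ultimately show ?thesis by (simp add: power_divide prod_power_distrib)
qed

lemma norm_binom_imag_coeff_sq_mult:
  "(cmod (binom_imag_coeff y k))\<^sup>2 * (fact k / pochhammer c k) = gauss_term y c k"
  unfolding norm_binom_imag_coeff_sq gauss_term_def by (simp add: power2_eq_square)

lemma binom_imag_coeff_sums:
  assumes "cmod z < 1"
  shows "(\<lambda>k. binom_imag_coeff y k * z ^ k) sums (1 - z) powr (\<i> * complex_of_real y)"
proof -
  have "(\<lambda>k. ((\<i> * complex_of_real y) gchoose k) * (-z) ^ k) sums (1 + - z) powr (\<i> * complex_of_real y)"
    by (rule gen_binomial_complex) (use assms in simp)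
  moreover have "((\<i> * complex_of_real y) gchoose k) * (-z) ^ k = binom_imag_coeff y k * z ^ k" for k
    unfolding binom_imag_coeff_def power_minus[of z k] by (simp only: ac_simps)
  ultimately show ?thesis by (simp only: diff_conv_add_uminus)
qed

lemma norm_one_minus_powr_imag_sq:
  assumes "z \<noteq> 1"
  shows "(cmod ((1 - z) powr (\<i> * complex_of_real y)))\<^sup>2 = exp (y * (-2 * Im (Ln (1 - z))))"
proof -
  have "1 - z \<noteq> 0" using assms by simp
  then have "(1 - z) powr (\<i> * complex_of_real y) = exp (\<i> * complex_of_real y * Ln (1 - z))"
    by (simp add: powr_def)
  then have "cmod ((1 - z) powr (\<i> * complex_of_real y)) = exp (- y * Im (Ln (1 - z)))"
    by simp
  then show ?thesis by (simp add: power2_eq_square exp_add[symmetric])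
qed

definition beta1_density :: "real \<Rightarrow> real \<Rightarrow> real" where
  "beta1_density a x = indicator {0..1} x * a * (1 - x) powr (a - 1)"

lemma Beta_of_nat_plus_1:
  assumes "a > 0"
  shows "a * Beta (real k + 1) a = fact k / pochhammer (a + 1) k"
proof -
  have "a \<notin> \<int>\<^sub>\<le>\<^sub>0" "a + 1 \<notin> \<int>\<^sub>\<le>\<^sub>0"
    using assms by (auto elim!: nonpos_Ints_cases)
  moreover have "Gamma a > 0" "Gamma (a + 1 + real k) > 0"
    using assms by auto
  ultimately show ?thesis
    using Gamma_fact[of k, where 'a = real] Gamma_plus1[of a] pochhammer_Gamma[of "a + 1" k]
    by (simp add: Beta_def field_simps add_ac)
qed

lemma nn_integral_beta1_density_power:
  assumes "a > 0"
  shows "(\<integral>\<^sup>+x. ennreal (beta1_density a x) * ennreal (x ^ k) \<partial>lborel)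
           = ennreal (fact k / pochhammer (a + 1) k)"
proof -
  have "((\<lambda>t. t powr (real k + 1 - 1) * (1 - t) powr (a - 1)) has_integral Beta (real k + 1) a) {0<..<1}"
    using has_integral_Beta_real[of "real k + 1" a] assms by (simp add: has_integral_Icc_iff_Ioo)
  then have "((\<lambda>t. t ^ k * (1 - t) powr (a - 1)) has_integral Beta (real k + 1) a) {0<..<1}"
    by (rule has_integral_cong[THEN iffD1, rotated]) (auto simp: powr_realpow)
  then have "((\<lambda>t. a * (t ^ k * (1 - t) powr (a - 1))) has_integral a * Beta (real k + 1) a) {0..1}"
    by (intro has_integral_mult_right) (simp add: has_integral_Icc_iff_Ioo)
  then have "(\<integral>\<^sup>+x. ennreal (a * (x ^ k * (1 - x) powr (a - 1))) * indicator {0..1} x \<partial>lborel)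
      = ennreal (a * Beta (real k + 1) a)"
    by (rule nn_integral_has_integral_lebesgue'[rotated]) (use assms in auto)
  moreover have "(\<integral>\<^sup>+x. ennreal (beta1_density a x) * ennreal (x ^ k) \<partial>lborel)
      = (\<integral>\<^sup>+x. ennreal (a * (x ^ k * (1 - x) powr (a - 1))) * indicator {0..1} x \<partial>lborel)"
  proof (rule nn_integral_cong)
    fix x :: real
    show "ennreal (beta1_density a x) * ennreal (x ^ k)
        = ennreal (a * (x ^ k * (1 - x) powr (a - 1))) * indicator {0..1} x"
    proof (cases "x \<in> {0..1}")
      case True
      then have "x ^ k \<ge> 0" by simp
      then show ?thesis
        using True assms by (simp add: beta1_density_def ennreal_mult'[symmetric] mult_ac)
    qed (simp add: beta1_density_def)
  qed
  ultimately show ?thesis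
    using Beta_of_nat_plus_1[OF assms, of k] by simp
qed

lemma borel_measurable_cnj [measurable]: "cnj \<in> borel_measurable borel"
  by (intro borel_measurable_continuous_onI continuous_intros)

context prob_space
begin

lemma integral_rotation_invariant:
  fixes Z :: "'a \<Rightarrow> complex" and f :: "complex \<Rightarrow> 'b::{banach, second_countable_topology}"
  assumes [measurable]: "Z \<in> borel_measurable M" "f \<in> borel_measurable borel"
    and rot_inv: "\<And>c. cmod c = 1 \<Longrightarrow> distr M borel (\<lambda>\<omega>. c * Z \<omega>) = distr M borel Z"
    and "cmod c = 1"
  shows "(\<integral>\<omega>. f (c * Z \<omega>) \<partial>M) = (\<integral>\<omega>. f (Z \<omega>) \<partial>M)"
proof -
  have "(\<integral>\<omega>. f (c * Z \<omega>) \<partial>M) = (\<integral>z. f z \<partial>distr M borel (\<lambda>\<omega>. c * Z \<omega>))"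
    by (rule integral_distr[symmetric]) auto
  also have "\<dots> = (\<integral>\<omega>. f (Z \<omega>) \<partial>M)"
    unfolding rot_inv[OF \<open>cmod c = 1\<close>] by (rule integral_distr) auto
  finally show ?thesis .
qed

lemma integral_rotation_invariant_mixed_power_eq_0:
  fixes Z :: "'a \<Rightarrow> complex"
  assumes [measurable]: "Z \<in> borel_measurable M"
    and rot_inv: "\<And>c. cmod c = 1 \<Longrightarrow> distr M borel (\<lambda>\<omega>. c * Z \<omega>) = distr M borel Z"
    and "k \<noteq> m"
  shows "(\<integral>\<omega>. Z \<omega> ^ k * cnj (Z \<omega>) ^ m \<partial>M) = 0"
proof -
  define \<phi> where "\<phi> = pi / (real k - real m)"
  define c where "c = cis \<phi>"
  have "c ^ k * cnj c ^ m = cis (real k * \<phi>) * cis (real m * (- \<phi>))"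
    unfolding c_def cis_cnj Complex.DeMoivre by simp
  also have "\<dots> = cis ((real k - real m) * \<phi>)"
    by (simp add: cis_mult algebra_simps)
  also have "(real k - real m) * \<phi> = pi"
    using \<open>k \<noteq> m\<close> by (simp add: \<phi>_def)
  finally have c_power: "c ^ k * cnj c ^ m = -1" by simp
  have [measurable]: "(\<lambda>z::complex. z ^ k * cnj z ^ m) \<in> borel_measurable borel"
    by (intro borel_measurable_continuous_onI continuous_intros)
  have "(\<integral>\<omega>. Z \<omega> ^ k * cnj (Z \<omega>) ^ m \<partial>M) = (\<integral>\<omega>. (c * Z \<omega>) ^ k * cnj (c * Z \<omega>) ^ m \<partial>M)"
    by (rule integral_rotation_invariant[symmetric]) (simp_all add: rot_inv c_def)
  also have "\<dots> = (\<integral>\<omega>. (c ^ k * cnj c ^ m) * (Z \<omega> ^ k * cnj (Z \<omega>) ^ m) \<partial>M)"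
    by (simp add: power_mult_distrib mult_ac)
  also have "\<dots> = - (\<integral>\<omega>. Z \<omega> ^ k * cnj (Z \<omega>) ^ m \<partial>M)"
    by (simp add: c_power)
  finally show ?thesis by simp
qed

lemma AE_norm_less_1_of_beta1:
  fixes Z :: "'a \<Rightarrow> complex"
  assumes [measurable]: "Z \<in> borel_measurable M"
    and law: "distributed M lborel (\<lambda>\<omega>. (cmod (Z \<omega>))\<^sup>2) (\<lambda>x. ennreal (beta1_density a x))"
  shows "AE \<omega> in M. cmod (Z \<omega>) < 1"
proof -
  have "AE x in lborel. 0 < ennreal (beta1_density a x) \<longrightarrow> x < 1"
  proof (rule AE_I2, rule impI)
    fix x :: real
    assume "0 < ennreal (beta1_density a x)"
    then show "x < 1"
      by (cases "x = 1"; cases "x \<in> {0..1}") (auto simp: beta1_density_def)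
  qed
  then have "AE x in density lborel (\<lambda>x. ennreal (beta1_density a x)). x < 1"
    using law by (subst AE_density) (auto simp: distributed_def)
  moreover have "distr M lborel (\<lambda>\<omega>. (cmod (Z \<omega>))\<^sup>2) = density lborel (\<lambda>x. ennreal (beta1_density a x))"
    using law by (simp add: distributed_def)
  ultimately have "AE x in distr M lborel (\<lambda>\<omega>. (cmod (Z \<omega>))\<^sup>2). x < 1"
    by (simp only:)
  then have "AE \<omega> in M. (cmod (Z \<omega>))\<^sup>2 < 1"
    by (subst (asm) AE_distr_iff) auto
  then show ?thesis
    by eventually_elim (simp add: power_less_one_iff abs_square_less_1)
qed

lemma integral_abs_power_of_beta1:
  fixes Z :: "'a \<Rightarrow> complex"
  assumes [measurable]: "Z \<in> borel_measurable M"
    and law: "distributed M lborel (\<lambda>\<omega>. (cmod (Z \<omega>))\<^sup>2) (\<lambda>x. ennreal (beta1_density a x))"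
    and "a > 0"
  shows "(\<integral>\<omega>. Z \<omega> ^ k * cnj (Z \<omega>) ^ k \<partial>M) = complex_of_real (fact k / pochhammer (a + 1) k)"
proof -
  have "AE \<omega> in M. cmod (Z \<omega>) < 1" by (rule AE_norm_less_1_of_beta1[OF _ law]) simp
  then have "integrable M (\<lambda>\<omega>. ((cmod (Z \<omega>))\<^sup>2) ^ k)"
    by (intro integrable_const_bound[where B = 1])
       (auto elim!: eventually_mono simp: power_le_one abs_square_le_1 norm_power)
  then have "ennreal (\<integral>\<omega>. ((cmod (Z \<omega>))\<^sup>2) ^ k \<partial>M) = (\<integral>\<^sup>+\<omega>. ennreal (((cmod (Z \<omega>))\<^sup>2) ^ k) \<partial>M)"
    by (simp add: nn_integral_eq_integral)
  also have "\<dots> = (\<integral>\<^sup>+x. ennreal (beta1_density a x) * ennreal (x ^ k) \<partial>lborel)"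
    by (rule distributed_nn_integral[OF law, symmetric]) simp
  also have "\<dots> = ennreal (fact k / pochhammer (a + 1) k)"
    by (rule nn_integral_beta1_density_power[OF \<open>a > 0\<close>])
  finally have real_moment: "(\<integral>\<omega>. ((cmod (Z \<omega>))\<^sup>2) ^ k \<partial>M) = fact k / pochhammer (a + 1) k"
    using \<open>a > 0\<close> pochhammer_pos[of "a + 1" k] by (subst (asm) ennreal_inj) auto
  have "Z \<omega> ^ k * cnj (Z \<omega>) ^ k = complex_of_real (((cmod (Z \<omega>))\<^sup>2) ^ k)" for \<omega>
    unfolding power_mult_distrib[symmetric] complex_norm_square[symmetric] of_real_power ..
  then have "(\<integral>\<omega>. Z \<omega> ^ k * cnj (Z \<omega>) ^ k \<partial>M) = (\<integral>\<omega>. complex_of_real (((cmod (Z \<omega>))\<^sup>2) ^ k) \<partial>M)"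
    by (simp only:)
  also have "\<dots> = complex_of_real (fact k / pochhammer (a + 1) k)"
    unfolding integral_complex_of_real real_moment ..
  finally show ?thesis .
qed

lemma integral_norm_poly_sq_of_beta1:
  fixes Z :: "'a \<Rightarrow> complex"
  assumes [measurable]: "Z \<in> borel_measurable M"
    and rot_inv: "\<And>c. cmod c = 1 \<Longrightarrow> distr M borel (\<lambda>\<omega>. c * Z \<omega>) = distr M borel Z"
    and law: "distributed M lborel (\<lambda>\<omega>. (cmod (Z \<omega>))\<^sup>2) (\<lambda>x. ennreal (beta1_density a x))"
    and "a > 0"
  shows "(\<integral>\<omega>. (cmod (\<Sum>k<N. b k * Z \<omega> ^ k))\<^sup>2 \<partial>M)
           = (\<Sum>k<N. (cmod (b k))\<^sup>2 * (fact k / pochhammer (a + 1) k))"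
proof -
  have "AE \<omega> in M. cmod (Z \<omega>) < 1" by (rule AE_norm_less_1_of_beta1[OF _ law]) simp
  then have integrable: "integrable M (\<lambda>\<omega>. Z \<omega> ^ k * cnj (Z \<omega>) ^ m)" for k m
    by (intro integrable_const_bound[where B = 1])
       (auto elim!: eventually_mono simp: norm_mult norm_power power_le_one mult_le_one)
  have expand: "complex_of_real ((cmod (\<Sum>k<N. b k * Z \<omega> ^ k))\<^sup>2)
      = (\<Sum>k<N. \<Sum>m<N. (b k * cnj (b m)) * (Z \<omega> ^ k * cnj (Z \<omega>) ^ m))" for \<omega>
    unfolding complex_norm_square cnj_sum sum_product
    by (simp add: mult_ac)
  have "complex_of_real (\<integral>\<omega>. (cmod (\<Sum>k<N. b k * Z \<omega> ^ k))\<^sup>2 \<partial>M)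
      = (\<Sum>k<N. \<Sum>m<N. (b k * cnj (b m)) * (\<integral>\<omega>. Z \<omega> ^ k * cnj (Z \<omega>) ^ m \<partial>M))"
    unfolding integral_complex_of_real[symmetric] expand using integrable by simp
  also have "\<dots> = (\<Sum>k<N. \<Sum>m<N. if m = k
      then (b k * cnj (b k)) * complex_of_real (fact k / pochhammer (a + 1) k) else 0)"
    by (intro sum.cong refl)
       (auto simp: integral_rotation_invariant_mixed_power_eq_0[OF _ rot_inv]
          integral_abs_power_of_beta1[OF _ law \<open>a > 0\<close>])
  also have "\<dots> = (\<Sum>k<N. (b k * cnj (b k)) * complex_of_real (fact k / pochhammer (a + 1) k))"
    by simp
  also have "\<dots> = complex_of_real (\<Sum>k<N. (cmod (b k))\<^sup>2 * (fact k / pochhammer (a + 1) k))"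
    by (simp add: complex_norm_square[symmetric])
  finally show ?thesis by (simp only: of_real_eq_iff)
qed

lemma nn_integral_norm_binom_imag_partial_sum_sq_le:
  fixes Z :: "'a \<Rightarrow> complex"
  assumes Z [measurable]: "Z \<in> borel_measurable M"
    and rot_inv: "\<And>c. cmod c = 1 \<Longrightarrow> distr M borel (\<lambda>\<omega>. c * Z \<omega>) = distr M borel Z"
    and law: "distributed M lborel (\<lambda>\<omega>. (cmod (Z \<omega>))\<^sup>2) (\<lambda>x. ennreal (beta1_density a x))"
    and "a > 0"
  shows "(\<integral>\<^sup>+\<omega>. ennreal ((cmod (\<Sum>k<N. binom_imag_coeff y k * Z \<omega> ^ k))\<^sup>2) \<partial>M)
           \<le> ennreal (exp (y\<^sup>2 / (a + 1/2)))"
proof -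
  have "AE \<omega> in M. (cmod (\<Sum>k<N. binom_imag_coeff y k * Z \<omega> ^ k))\<^sup>2 \<le> (\<Sum>k<N. cmod (binom_imag_coeff y k))\<^sup>2"
    using AE_norm_less_1_of_beta1[OF Z law]
  proof eventually_elim
    case (elim \<omega>)
    have "cmod (\<Sum>k<N. binom_imag_coeff y k * Z \<omega> ^ k) \<le> (\<Sum>k<N. cmod (binom_imag_coeff y k))"
      using elim by (intro order_trans[OF norm_sum] sum_mono)
        (simp add: norm_mult norm_power mult_left_le power_le_one)
    then show ?case by (simp add: power_mono)
  qed
  then have "integrable M (\<lambda>\<omega>. (cmod (\<Sum>k<N. binom_imag_coeff y k * Z \<omega> ^ k))\<^sup>2)"
    by (intro integrable_const_bound[where B = "(\<Sum>k<N. cmod (binom_imag_coeff y k))\<^sup>2"]) simp_all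
  then have "(\<integral>\<^sup>+\<omega>. ennreal ((cmod (\<Sum>k<N. binom_imag_coeff y k * Z \<omega> ^ k))\<^sup>2) \<partial>M)
      = ennreal (\<integral>\<omega>. (cmod (\<Sum>k<N. binom_imag_coeff y k * Z \<omega> ^ k))\<^sup>2 \<partial>M)"
    by (rule nn_integral_eq_integral) simp
  also have "(\<integral>\<omega>. (cmod (\<Sum>k<N. binom_imag_coeff y k * Z \<omega> ^ k))\<^sup>2 \<partial>M)
      = (\<Sum>k<N. (cmod (binom_imag_coeff y k))\<^sup>2 * (fact k / pochhammer (a + 1) k))"
    by (rule integral_norm_poly_sq_of_beta1[OF Z rot_inv law \<open>a > 0\<close>])
  also have "\<dots> = (\<Sum>k<N. gauss_term y (a + 1) k)"
    by (simp only: norm_binom_imag_coeff_sq_mult)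
  also have "\<dots> \<le> exp (y\<^sup>2 / (a + 1/2))"
    using sum_gauss_term_le_exp[of "a + 1" y N] \<open>a > 0\<close> by (simp add: algebra_simps)
  finally show ?thesis
    by (simp add: ennreal_leI)
qed

lemma integral_exp_Im_Ln_one_minus_le:
  fixes Z :: "'a \<Rightarrow> complex"
  assumes [measurable]: "Z \<in> borel_measurable M"
    and rot_inv: "\<And>c. cmod c = 1 \<Longrightarrow> distr M borel (\<lambda>\<omega>. c * Z \<omega>) = distr M borel Z"
    and law: "distributed M lborel (\<lambda>\<omega>. (cmod (Z \<omega>))\<^sup>2) (\<lambda>x. ennreal (beta1_density a x))"
    and "a > 0"
  shows "(\<integral>\<omega>. exp (y * (-2 * Im (Ln (1 - Z \<omega>)))) \<partial>M) \<le> exp (y\<^sup>2 / (a + 1/2))"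
proof -
  define B where "B = exp (y\<^sup>2 / (a + 1/2))"
  define u where "u N \<omega> = (cmod (\<Sum>k<N. binom_imag_coeff y k * Z \<omega> ^ k))\<^sup>2" for N \<omega>
  have norm_less_1: "AE \<omega> in M. cmod (Z \<omega>) < 1" by (rule AE_norm_less_1_of_beta1[OF _ law]) simp
  have "AE \<omega> in M. (\<lambda>N. u N \<omega>) \<longlonglongrightarrow> exp (y * (-2 * Im (Ln (1 - Z \<omega>))))"
    using norm_less_1
  proof eventually_elim
    case (elim \<omega>)
    then have "Z \<omega> \<noteq> 1" by auto
    from binom_imag_coeff_sums[OF elim, of y] show ?case
      unfolding u_def sums_def norm_one_minus_powr_imag_sq[OF \<open>Z \<omega> \<noteq> 1\<close>, symmetric]
      by (intro tendsto_intros)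
  qed
  then have "(\<integral>\<^sup>+\<omega>. ennreal (exp (y * (-2 * Im (Ln (1 - Z \<omega>))))) \<partial>M)
      = (\<integral>\<^sup>+\<omega>. liminf (\<lambda>N. ennreal (u N \<omega>)) \<partial>M)"
    by (intro nn_integral_cong_AE)
       (auto elim!: eventually_mono intro!: lim_imp_Liminf[symmetric] tendsto_ennrealI)
  also have "\<dots> \<le> liminf (\<lambda>N. \<integral>\<^sup>+\<omega>. ennreal (u N \<omega>) \<partial>M)"
    by (rule nn_integral_liminf) (simp add: u_def)
  also have "\<dots> \<le> liminf (\<lambda>N. ennreal B)"
    unfolding u_def B_def
    by (intro Liminf_mono always_eventually allI
        nn_integral_norm_binom_imag_partial_sum_sq_le[OF _ rot_inv law \<open>a > 0\<close>]) simp
  also have "\<dots> = ennreal B"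
    by (simp add: Liminf_const)
  finally have nn_bound: "(\<integral>\<^sup>+\<omega>. ennreal (exp (y * (-2 * Im (Ln (1 - Z \<omega>))))) \<partial>M) \<le> ennreal B" .
  have "(\<lambda>\<omega>. exp (y * (-2 * Im (Ln (1 - Z \<omega>))))) \<in> borel_measurable M"
    by measurable
  then have "(\<integral>\<omega>. exp (y * (-2 * Im (Ln (1 - Z \<omega>)))) \<partial>M)
      = enn2real (\<integral>\<^sup>+\<omega>. ennreal (exp (y * (-2 * Im (Ln (1 - Z \<omega>))))) \<partial>M)"
    by (rule integral_eq_nn_integral) auto
  also have "\<dots> \<le> B"
    using enn2real_mono[OF nn_bound] by (simp add: B_def)
  finally show ?thesis unfolding B_def .
qed

end

section \<open>The angles and the filtration\<close>

lemma Psi_Suc: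
  "Psi a (Suc n) \<theta> = Psi a n \<theta> + \<theta> - 2 * Im (Ln (1 - a n * exp (\<i> * complex_of_real (Psi a n \<theta>))))"
  by (subst (1 2) Psi.simps) (simp add: algebra_simps)

definition Psi_dev :: "(nat \<Rightarrow> 'w \<Rightarrow> complex) \<Rightarrow> real \<Rightarrow> nat \<Rightarrow> nat \<Rightarrow> 'w \<Rightarrow> real" where
  "Psi_dev \<alpha> \<theta> j m \<omega> = Psi (\<lambda>r. \<alpha> r \<omega>) (j + m) \<theta> - Psi (\<lambda>r. \<alpha> r \<omega>) j \<theta> - real m * \<theta>"

lemma Psi_dev_0 [simp]: "Psi_dev \<alpha> \<theta> j 0 \<omega> = 0"
  by (simp add: Psi_dev_def)

lemma Psi_dev_Suc:
  "Psi_dev \<alpha> \<theta> j (Suc m) \<omega> = Psi_dev \<alpha> \<theta> j m \<omega>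
     + -2 * Im (Ln (1 - \<alpha> (j + m) \<omega> * exp (\<i> * complex_of_real (Psi (\<lambda>r. \<alpha> r \<omega>) (j + m) \<theta>))))"
  by (simp add: Psi_dev_def Psi_Suc algebra_simps)

(* Ln 0 is an unspecified value, so the bound has to carry it along. *)
lemma abs_Im_Ln_le: "\<bar>Im (Ln z)\<bar> \<le> pi + \<bar>Im (Ln 0)\<bar>"
  by (cases "z = 0") (use mpi_less_Im_Ln[of z] Im_Ln_le_pi[of z] in auto)

lemma mult_le_abs_mult_of_abs_le:
  fixes s x :: "'a::linordered_idom"
  assumes "\<bar>x\<bar> \<le> B"
  shows "s * x \<le> \<bar>s\<bar> * B"
proof -
  have "s * x \<le> \<bar>s\<bar> * \<bar>x\<bar>" by (metis abs_ge_self abs_mult)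
  also have "\<dots> \<le> \<bar>s\<bar> * B" using assms by (simp add: mult_left_mono)
  finally show ?thesis .
qed

lemma abs_Psi_dev_le: "\<bar>Psi_dev \<alpha> \<theta> j m \<omega>\<bar> \<le> real m * (2 * (pi + \<bar>Im (Ln 0)\<bar>))"
proof (induction m)
  case (Suc m)
  let ?z = "1 - \<alpha> (j + m) \<omega> * exp (\<i> * complex_of_real (Psi (\<lambda>r. \<alpha> r \<omega>) (j + m) \<theta>))"
  have "\<bar>-2 * Im (Ln ?z)\<bar> \<le> 2 * (pi + \<bar>Im (Ln 0)\<bar>)"
    using abs_Im_Ln_le[of ?z] by simp
  with Suc show ?case
    unfolding Psi_dev_Suc by (simp add: algebra_simps)
qed simp

definition vimage_sets :: "'w measure \<Rightarrow> ('w \<Rightarrow> complex) \<Rightarrow> 'w set set" where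
  "vimage_sets M X = {X -` A \<inter> space M | A. A \<in> sets borel}"

lemma filt_eq_sigma: "filt M \<alpha> j = sigma (space M) (\<Union>r<j. vimage_sets M (\<alpha> r))"
  unfolding filt_def vimage_sets_def ..

lemma vimage_sets_subset_Pow: "(\<Union>r\<in>I. vimage_sets M (\<alpha> r)) \<subseteq> Pow (space M)"
  unfolding vimage_sets_def by auto

lemma space_filt [simp]: "space (filt M \<alpha> j) = space M"
  unfolding filt_eq_sigma by (rule space_measure_of[OF vimage_sets_subset_Pow])

lemma sets_filt: "sets (filt M \<alpha> j) = sigma_sets (space M) (\<Union>r<j. vimage_sets M (\<alpha> r))"
  unfolding filt_eq_sigma by (rule sets_measure_of[OF vimage_sets_subset_Pow])

lemma sets_filt_mono: "j \<le> k \<Longrightarrow> sets (filt M \<alpha> j) \<subseteq> sets (filt M \<alpha> k)"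
  unfolding sets_filt by (rule sigma_sets_mono') (fastforce intro: order_less_le_trans)

lemma measurable_filt_mono:
  "j \<le> k \<Longrightarrow> f \<in> measurable (filt M \<alpha> j) N \<Longrightarrow> f \<in> measurable (filt M \<alpha> k) N"
  using sets_filt_mono[of j k M \<alpha>] by (auto simp: measurable_def)

lemma measurable_alpha_filt: "i < j \<Longrightarrow> \<alpha> i \<in> borel_measurable (filt M \<alpha> j)"
proof (rule measurableI)
  fix A :: "complex set"
  assume "i < j" "A \<in> sets borel"
  then have "\<alpha> i -` A \<inter> space M \<in> (\<Union>r<j. vimage_sets M (\<alpha> r))"
    unfolding vimage_sets_def by blast
  then show "\<alpha> i -` A \<inter> space (filt M \<alpha> j) \<in> sets (filt M \<alpha> j)"
    unfolding sets_filt by auto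
qed auto

lemma measurable_Psi_filt: "(\<lambda>\<omega>. Psi (\<lambda>r. \<alpha> r \<omega>) j \<theta>) \<in> borel_measurable (filt M \<alpha> j)"
proof (induction j rule: less_induct)
  case (less j)
  have [measurable]: "\<alpha> k \<in> borel_measurable (filt M \<alpha> j)" if "k < j" for k
    using that by (rule measurable_alpha_filt)
  have [measurable]: "(\<lambda>\<omega>. Psi (\<lambda>r. \<alpha> r \<omega>) k \<theta>) \<in> borel_measurable (filt M \<alpha> j)" if "k < j" for k
    using measurable_filt_mono[OF less_imp_le[OF that] less[OF that]] .
  show ?case
    by (subst Psi.simps) measurable
qed

lemma measurable_Psi_dev_filt: "Psi_dev \<alpha> \<theta> j m \<in> borel_measurable (filt M \<alpha> (j + m))"
proof -
  have [measurable]: "(\<lambda>\<omega>. Psi (\<lambda>r. \<alpha> r \<omega>) j \<theta>) \<in> borel_measurable (filt M \<alpha> (j + m))"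
    by (rule measurable_filt_mono[OF _ measurable_Psi_filt]) simp
  have [measurable]: "(\<lambda>\<omega>. Psi (\<lambda>r. \<alpha> r \<omega>) (j + m) \<theta>) \<in> borel_measurable (filt M \<alpha> (j + m))"
    by (rule measurable_Psi_filt)
  show ?thesis
    unfolding Psi_dev_def by measurable
qed

lemma subalgebra_filt:
  assumes "\<And>i. \<alpha> i \<in> borel_measurable M"
  shows "subalgebra M (filt M \<alpha> j)"
proof -
  have "(\<Union>r<j. vimage_sets M (\<alpha> r)) \<subseteq> sets M"
    unfolding vimage_sets_def using assms by (auto intro: measurable_sets)
  from sets.sigma_sets_subset[OF this] show ?thesis
    by (simp add: subalgebra_def sets_filt)
qed

section \<open>Conditional exponential moments\<close>

lemma sum_inverse_le_ln:
  assumes "\<beta> > 0"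
  shows "(\<Sum>i<l. 1 / (1 + \<beta> * real (j + i + 1))) \<le> ln (1 + \<beta> * real l / (1 + \<beta> * real j)) / \<beta>"
proof -
  have pos: "1 + \<beta> * real n > 0" for n
    using assms by (simp add: add_pos_nonneg)
  define f where "f i = ln (1 + \<beta> * real (j + i)) / \<beta>" for i
  have "1 / (1 + \<beta> * real (j + i + 1)) \<le> f (Suc i) - f i" for i
  proof -
    define u v where "u = 1 + \<beta> * real (j + i)" and "v = 1 + \<beta> * real (j + i + 1)"
    have "u > 0" "v > 0" "v = u + \<beta>"
      using pos[of "j + i"] pos[of "j + i + 1"] by (simp_all add: u_def v_def algebra_simps)
    have "ln u - ln v \<le> u / v - 1"
      using ln_le_minus_one[of "u / v"] \<open>u > 0\<close> \<open>v > 0\<close> by (simp add: ln_div)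
    also have "u / v - 1 = - \<beta> * (1 / v)"
      using \<open>v > 0\<close> \<open>v = u + \<beta>\<close> by (simp add: field_simps)
    finally have "1 / v \<le> (ln v - ln u) / \<beta>"
      using assms by (simp add: field_simps)
    moreover have "f (Suc i) - f i = (ln v - ln u) / \<beta>"
      by (simp add: f_def u_def v_def diff_divide_distrib)
    ultimately show ?thesis by (simp add: v_def)
  qed
  then have "(\<Sum>i<l. 1 / (1 + \<beta> * real (j + i + 1))) \<le> (\<Sum>i<l. f (Suc i) - f i)"
    by (intro sum_mono)
  also have "\<dots> = f l - f 0" by (rule sum_lessThan_telescope)
  also have "\<dots> = ln ((1 + \<beta> * real (j + l)) / (1 + \<beta> * real j)) / \<beta>"
    using pos[of j] pos[of "j + l"] by (simp add: f_def ln_div diff_divide_distrib)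
  also have "(1 + \<beta> * real (j + l)) / (1 + \<beta> * real j) = 1 + \<beta> * real l / (1 + \<beta> * real j)"
    using pos[of j] by (simp add: field_simps)
  finally show ?thesis .
qed

context prob_space
begin

lemma integral_indep_var_iterated:
  fixes H :: "'b \<times> 'b \<Rightarrow> real"
  assumes indep: "indep_var S X S Y"
    and [measurable]: "H \<in> borel_measurable (S \<Otimes>\<^sub>M S)"
    and integrable: "integrable M (\<lambda>\<omega>. H (X \<omega>, Y \<omega>))"
  shows "(\<integral>\<omega>. H (X \<omega>, Y \<omega>) \<partial>M) = (\<integral>x. (\<integral>y. H (x, y) \<partial>distr M S Y) \<partial>distr M S X)"
proof -
  have [measurable]: "X \<in> measurable M S" "Y \<in> measurable M S"
    and joint: "distr M S X \<Otimes>\<^sub>M distr M S Y = distr M (S \<Otimes>\<^sub>M S) (\<lambda>\<omega>. (X \<omega>, Y \<omega>))"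
    using indep by (simp_all add: indep_var_distribution_eq)
  interpret P: pair_sigma_finite "distr M S X" "distr M S Y"
    by (simp add: pair_sigma_finite_def prob_space_distr prob_space_imp_sigma_finite)
  have "integrable (distr M S X \<Otimes>\<^sub>M distr M S Y) H"
    unfolding joint using integrable by (subst integrable_distr_eq) auto
  moreover have "(\<integral>\<omega>. H (X \<omega>, Y \<omega>) \<partial>M) = (\<integral>z. H z \<partial>(distr M S X \<Otimes>\<^sub>M distr M S Y))"
    unfolding joint by (rule integral_distr[symmetric]) auto
  ultimately show ?thesis
    by (simp add: P.integral_fst')
qed

lemma indep_var_filt_alpha:
  fixes \<alpha> :: "nat \<Rightarrow> 'a \<Rightarrow> complex"
  assumes indep: "indep_vars (\<lambda>_. borel) \<alpha> UNIV"
    and V: "V \<in> borel_measurable (filt M \<alpha> r)"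
  shows "indep_var borel V borel (\<alpha> r)"
proof -
  have [measurable]: "\<alpha> i \<in> borel_measurable M" for i
    using indep unfolding indep_vars_def2 by auto
  have "indep_sets (\<lambda>b. sigma_sets (space M) (\<Union>i\<in>(if b then {..<r} else {r}). vimage_sets M (\<alpha> i))) UNIV"
  proof (rule indep_sets_collect_sigma)
    have "indep_sets (\<lambda>i. vimage_sets M (\<alpha> i)) UNIV"
      using indep unfolding indep_vars_def2 vimage_sets_def by simp
    then show "indep_sets (\<lambda>i. vimage_sets M (\<alpha> i)) (\<Union>b\<in>UNIV. if b then {..<r} else {r})"
      by (rule indep_sets_mono_index[rotated]) simp
    show "Int_stable (vimage_sets M (\<alpha> i))" for i
    proof (rule Int_stableI)
      fix A B assume "A \<in> vimage_sets M (\<alpha> i)" "B \<in> vimage_sets M (\<alpha> i)"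
      then obtain A' B' where "A' \<in> sets borel" "B' \<in> sets borel"
        "A = \<alpha> i -` A' \<inter> space M" "B = \<alpha> i -` B' \<inter> space M"
        unfolding vimage_sets_def by blast
      then show "A \<inter> B \<in> vimage_sets M (\<alpha> i)"
        unfolding vimage_sets_def by (intro CollectI exI[of _ "A' \<inter> B'"]) auto
    qed
    show "disjoint_family_on (\<lambda>b. if b then {..<r} else {r}) UNIV"
      unfolding disjoint_family_on_def by auto
  qed
  then have "indep_sets (\<lambda>b. {case_bool V (\<alpha> r) b -` A \<inter> space M | A. A \<in> sets borel}) UNIV"
  proof (rule indep_sets_mono_sets)
    fix b :: bool
    show "{case_bool V (\<alpha> r) b -` A \<inter> space M | A. A \<in> sets borel}
        \<subseteq> sigma_sets (space M) (\<Union>i\<in>(if b then {..<r} else {r}). vimage_sets M (\<alpha> i))"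
      using measurable_sets[OF V]
      by (cases b) (auto simp: sets_filt vimage_sets_def intro: sigma_sets.Basic)
  qed
  moreover have "V \<in> borel_measurable M"
    by (rule measurable_from_subalg[OF subalgebra_filt V]) simp
  moreover have "case_bool borel borel = (\<lambda>_. borel :: complex measure)"
    by (simp add: fun_eq_iff split: bool.split)
  ultimately show ?thesis
    unfolding indep_var_def indep_vars_def2 by (auto split: bool.split)
qed

lemma integral_mult_rotated_indep:
  fixes V U :: "'a \<Rightarrow> complex" and h :: "complex \<Rightarrow> real"
  assumes indep: "indep_var borel V borel U"
    and rot_inv: "\<And>c. cmod c = 1 \<Longrightarrow> distr M borel (\<lambda>\<omega>. c * U \<omega>) = distr M borel U"
    and V_bound: "\<And>\<omega>. \<omega> \<in> space M \<Longrightarrow> \<bar>Re (V \<omega>)\<bar> \<le> B\<^sub>V"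
    and [measurable]: "h \<in> borel_measurable borel"
    and h_bound: "\<And>z. \<bar>h z\<bar> \<le> B\<^sub>h"
  shows "(\<integral>\<omega>. Re (V \<omega>) * h (U \<omega> * exp (\<i> * complex_of_real (Im (V \<omega>)))) \<partial>M)
           = (\<integral>\<omega>. h (U \<omega>) \<partial>M) * (\<integral>\<omega>. Re (V \<omega>) \<partial>M)"
proof -
  have [measurable]: "V \<in> borel_measurable M" "U \<in> borel_measurable M"
    using indep by (simp_all add: indep_var_rv1 indep_var_rv2)
  define H where "H p = Re (fst p) * h (snd p * exp (\<i> * complex_of_real (Im (fst p))))"
    for p :: "complex \<times> complex"
  define C where "C = (\<integral>\<omega>. h (U \<omega>) \<partial>M)"
  have [measurable]: "H \<in> borel_measurable (borel \<Otimes>\<^sub>M borel)"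
    unfolding H_def by measurable
  have "integrable M (\<lambda>\<omega>. H (V \<omega>, U \<omega>))"
  proof (rule integrable_const_bound[where B = "B\<^sub>V * B\<^sub>h"])
    show "AE \<omega> in M. norm (H (V \<omega>, U \<omega>)) \<le> B\<^sub>V * B\<^sub>h"
      using V_bound h_bound
      by (intro AE_I2) (auto simp: H_def abs_mult intro!: mult_mono order_trans[OF abs_ge_zero])
  qed simp
  then have "(\<integral>\<omega>. H (V \<omega>, U \<omega>) \<partial>M) = (\<integral>x. (\<integral>z. H (x, z) \<partial>distr M borel U) \<partial>distr M borel V)"
    by (intro integral_indep_var_iterated[OF indep]) simp
  also have "\<dots> = (\<integral>x. Re x * C \<partial>distr M borel V)"
  proof (rule Bochner_Integration.integral_cong[OF refl])
    fix x :: complex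
    have unit: "cmod (exp (\<i> * complex_of_real (Im x))) = 1" by simp
    have "(\<integral>\<omega>. h (exp (\<i> * complex_of_real (Im x)) * U \<omega>) \<partial>M) = C"
      unfolding C_def by (rule integral_rotation_invariant[OF _ _ rot_inv unit]) simp_all
    then show "(\<integral>z. H (x, z) \<partial>distr M borel U) = Re x * C"
      by (subst integral_distr) (simp_all add: H_def mult.commute)
  qed
  also have "\<dots> = (\<integral>\<omega>. Re (V \<omega>) * C \<partial>M)"
    by (subst integral_distr) simp_all
  finally show ?thesis
    by (simp add: H_def C_def mult.commute)
qed

lemma integral_mult_rotated_alpha:
  fixes \<alpha> :: "nat \<Rightarrow> 'a \<Rightarrow> complex" and W \<Phi> :: "'a \<Rightarrow> real" and h :: "complex \<Rightarrow> real"
  assumes indep: "indep_vars (\<lambda>_. borel) \<alpha> UNIV"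
    and rot_inv: "\<And>c. cmod c = 1 \<Longrightarrow> distr M borel (\<lambda>\<omega>. c * \<alpha> r \<omega>) = distr M borel (\<alpha> r)"
    and W: "W \<in> borel_measurable (filt M \<alpha> r)" and \<Phi>: "\<Phi> \<in> borel_measurable (filt M \<alpha> r)"
    and W_bound: "\<And>\<omega>. \<omega> \<in> space M \<Longrightarrow> \<bar>W \<omega>\<bar> \<le> B\<^sub>W"
    and h: "h \<in> borel_measurable borel"
    and h_bound: "\<And>z. \<bar>h z\<bar> \<le> B\<^sub>h"
  shows "(\<integral>\<omega>. W \<omega> * h (\<alpha> r \<omega> * exp (\<i> * complex_of_real (\<Phi> \<omega>))) \<partial>M)
           = (\<integral>\<omega>. h (\<alpha> r \<omega>) \<partial>M) * (\<integral>\<omega>. W \<omega> \<partial>M)"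
proof -
  (* indep_var needs both variables in the same space, so the pair (W, \<Phi>) is packed into one
     complex number. *)
  define V where "V \<omega> = complex_of_real (W \<omega>) + \<i> * complex_of_real (\<Phi> \<omega>)" for \<omega>
  have "V \<in> borel_measurable (filt M \<alpha> r)"
    unfolding V_def using W \<Phi> by measurable
  then have indep_V: "indep_var borel V borel (\<alpha> r)"
    by (rule indep_var_filt_alpha[OF indep])
  have "\<bar>Re (V \<omega>)\<bar> \<le> B\<^sub>W" if "\<omega> \<in> space M" for \<omega>
    using W_bound[OF that] by (simp add: V_def)
  from integral_mult_rotated_indep[OF indep_V rot_inv this h h_bound] show ?thesis
    by (simp add: V_def)
qed

lemma integral_indicator_exp_Psi_dev:
  fixes \<alpha> :: "nat \<Rightarrow> 'a \<Rightarrow> complex"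
  assumes indep: "indep_vars (\<lambda>_. borel) \<alpha> UNIV"
    and rot_inv: "\<And>k c. cmod c = 1 \<Longrightarrow> distr M borel (\<lambda>\<omega>. c * \<alpha> k \<omega>) = distr M borel (\<alpha> k)"
    and A: "A \<in> sets (filt M \<alpha> j)"
  shows "(\<integral>\<omega>. indicator A \<omega> * exp (s * Psi_dev \<alpha> \<theta> j m \<omega>) \<partial>M)
           = (\<Prod>i<m. \<integral>\<omega>. exp (s * (-2 * Im (Ln (1 - \<alpha> (j + i) \<omega>)))) \<partial>M) * measure M A"
proof (induction m)
  case 0
  have "A \<in> sets M"
    using A subalgebra_filt[of \<alpha> M j] indep by (auto simp: subalgebra_def indep_vars_def2)
  then show ?case by simp
next
  case (Suc m)
  define B where "B = 2 * (pi + \<bar>Im (Ln 0)\<bar>)"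
  define W where "W \<omega> = indicator A \<omega> * exp (s * Psi_dev \<alpha> \<theta> j m \<omega>)" for \<omega>
  define h where "h z = exp (s * (-2 * Im (Ln (1 - z))))" for z
  have "indicator A \<in> borel_measurable (filt M \<alpha> j)"
    using A by simp
  then have [measurable]: "indicator A \<in> borel_measurable (filt M \<alpha> (j + m))"
    by (rule measurable_filt_mono[rotated]) simp
  have [measurable]: "Psi_dev \<alpha> \<theta> j m \<in> borel_measurable (filt M \<alpha> (j + m))"
    by (rule measurable_Psi_dev_filt)
  have W: "W \<in> borel_measurable (filt M \<alpha> (j + m))"
    unfolding W_def by measurable
  have W_bound: "\<bar>W \<omega>\<bar> \<le> exp (\<bar>s\<bar> * (real m * B))" for \<omega>
    using mult_le_abs_mult_of_abs_le[OF abs_Psi_dev_le, of s \<alpha> \<theta> j m \<omega>]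
    by (simp add: W_def B_def indicator_def)
  have h_bound: "\<bar>h z\<bar> \<le> exp (\<bar>s\<bar> * B)" for z
    using mult_le_abs_mult_of_abs_le[of "-2 * Im (Ln (1 - z))" B s] abs_Im_Ln_le[of "1 - z"]
    by (simp add: h_def B_def abs_mult)
  have h: "h \<in> borel_measurable borel"
    unfolding h_def by measurable
  have "(\<integral>\<omega>. indicator A \<omega> * exp (s * Psi_dev \<alpha> \<theta> j (Suc m) \<omega>) \<partial>M)
      = (\<integral>\<omega>. W \<omega> * h (\<alpha> (j + m) \<omega> * exp (\<i> * complex_of_real (Psi (\<lambda>r. \<alpha> r \<omega>) (j + m) \<theta>))) \<partial>M)"
    by (simp add: W_def h_def Psi_dev_Suc algebra_simps flip: exp_add)
  also have "\<dots> = (\<integral>\<omega>. h (\<alpha> (j + m) \<omega>) \<partial>M) * (\<integral>\<omega>. W \<omega> \<partial>M)"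
    by (rule integral_mult_rotated_alpha[OF indep rot_inv W measurable_Psi_filt W_bound h h_bound])
  also have "\<dots> = (\<Prod>i<Suc m. \<integral>\<omega>. exp (s * (-2 * Im (Ln (1 - \<alpha> (j + i) \<omega>)))) \<partial>M) * measure M A"
    using Suc.IH by (simp add: W_def h_def mult_ac)
  finally show ?case .
qed

lemma prod_integral_exp_Im_Ln_le:
  fixes \<alpha> :: "nat \<Rightarrow> 'a \<Rightarrow> complex"
  assumes "\<beta> > 0"
    and [measurable]: "\<And>k. \<alpha> k \<in> borel_measurable M"
    and rot_inv: "\<And>k c. cmod c = 1 \<Longrightarrow> distr M borel (\<lambda>\<omega>. c * \<alpha> k \<omega>) = distr M borel (\<alpha> k)"
    and law: "\<And>k. distributed M lborel (\<lambda>\<omega>. (cmod (\<alpha> k \<omega>))\<^sup>2)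
                (\<lambda>x. ennreal (beta1_density (\<beta> * real (k + 1) / 2) x))"
  shows "(\<Prod>i<l. \<integral>\<omega>. exp (s * (-2 * Im (Ln (1 - \<alpha> (j + i) \<omega>)))) \<partial>M)
           \<le> exp (2 * s\<^sup>2 * (ln (1 + \<beta> * real l / (1 + \<beta> * real j)) / \<beta>))"
proof -
  have factor: "(\<integral>\<omega>. exp (s * (-2 * Im (Ln (1 - \<alpha> k \<omega>)))) \<partial>M)
      \<le> exp (2 * s\<^sup>2 * (1 / (1 + \<beta> * real (k + 1))))" for k
  proof -
    have "(\<integral>\<omega>. exp (s * (-2 * Im (Ln (1 - \<alpha> k \<omega>)))) \<partial>M) \<le> exp (s\<^sup>2 / (\<beta> * real (k + 1) / 2 + 1/2))"
      using \<open>\<beta> > 0\<close> by (intro integral_exp_Im_Ln_one_minus_le[OF _ rot_inv law]) simp_all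
    also have "s\<^sup>2 / (\<beta> * real (k + 1) / 2 + 1/2) = 2 * s\<^sup>2 * (1 / (1 + \<beta> * real (k + 1)))"
      by (simp add: field_simps)
    finally show ?thesis .
  qed
  have "(\<Prod>i<l. \<integral>\<omega>. exp (s * (-2 * Im (Ln (1 - \<alpha> (j + i) \<omega>)))) \<partial>M)
      \<le> (\<Prod>i<l. exp (2 * s\<^sup>2 * (1 / (1 + \<beta> * real (j + i + 1)))))"
  proof (rule prod_mono)
    fix i
    show "0 \<le> (\<integral>\<omega>. exp (s * (-2 * Im (Ln (1 - \<alpha> (j + i) \<omega>)))) \<partial>M)
        \<and> (\<integral>\<omega>. exp (s * (-2 * Im (Ln (1 - \<alpha> (j + i) \<omega>)))) \<partial>M)
          \<le> exp (2 * s\<^sup>2 * (1 / (1 + \<beta> * real (j + i + 1))))"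
      by (rule conjI[OF Bochner_Integration.integral_nonneg factor[of "j + i"]]) simp
  qed
  also have "\<dots> = exp (2 * s\<^sup>2 * (\<Sum>i<l. 1 / (1 + \<beta> * real (j + i + 1))))"
    by (simp add: exp_sum sum_distrib_left)
  also have "\<dots> \<le> exp (2 * s\<^sup>2 * (ln (1 + \<beta> * real l / (1 + \<beta> * real j)) / \<beta>))"
    by (subst exp_le_cancel_iff, rule mult_left_mono[OF sum_inverse_le_ln[OF \<open>\<beta> > 0\<close>]]) simp
  finally show ?thesis .
qed

end

section \<open>A conditional Chernoff bound\<close>

lemma indicator_abs_ge_le_exp:
  fixes q t x :: real
  assumes "q \<ge> 0"
  shows "indicator {x. t \<le> \<bar>x\<bar>} x \<le> exp (- q * t) * (exp (q * x) + exp (- q * x))"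
proof (cases "t \<le> \<bar>x\<bar>")
  case True
  have "q * t \<le> q * \<bar>x\<bar>"
    using True assms by (rule mult_left_mono)
  then have "exp (q * t) \<le> exp (q * \<bar>x\<bar>)" by simp
  also have "\<dots> \<le> exp (q * x) + exp (- q * x)"
    by (cases "x \<ge> 0") (simp_all add: add_increasing add_increasing2)
  finally show ?thesis
    using True by (simp add: exp_minus field_simps)
qed (simp add: add_nonneg_nonneg)

(* t \<beta> / (4 L) minimises the Chernoff exponent - q t + 2 q\<^sup>2 L / \<beta>. *)
lemma chernoff_exponent_eq:
  fixes t L \<beta> :: real
  assumes "L > 0" "\<beta> > 0"
  shows "- (t * \<beta> / (4 * L)) * t + 2 * (t * \<beta> / (4 * L))\<^sup>2 * (L / \<beta>) = - (t\<^sup>2 * \<beta> / (8 * L))"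
  using assms by (simp add: field_simps power2_eq_square)

context prob_space
begin

lemma finite_measure_subalgebraI: "subalgebra M F \<Longrightarrow> finite_measure_subalgebra M F"
  by (simp add: finite_measure_subalgebra_def finite_measure_subalgebra_axioms_def finite_measure_axioms)

lemma integrable_exp_mult_of_bounded:
  fixes S :: "'a \<Rightarrow> real"
  assumes [measurable]: "S \<in> borel_measurable M"
    and S_bound: "\<And>\<omega>. \<omega> \<in> space M \<Longrightarrow> \<bar>S \<omega>\<bar> \<le> B"
  shows "integrable M (\<lambda>\<omega>. exp (s * S \<omega>))"
  using S_bound
  by (intro integrable_const_bound[where B = "exp (\<bar>s\<bar> * B)"] AE_I2)
     (auto intro: mult_le_abs_mult_of_abs_le)

lemma real_cond_exp_exp_mult_eq_const:
  fixes S :: "'a \<Rightarrow> real"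
  assumes sub: "subalgebra M F"
    and [measurable]: "S \<in> borel_measurable M"
    and S_bound: "\<And>\<omega>. \<omega> \<in> space M \<Longrightarrow> \<bar>S \<omega>\<bar> \<le> B"
    and mgf: "\<And>A. A \<in> sets F \<Longrightarrow> (\<integral>\<omega>. indicator A \<omega> * exp (s * S \<omega>) \<partial>M) = c * measure M A"
  shows "AE \<omega> in M. real_cond_exp M F (\<lambda>\<omega>. exp (s * S \<omega>)) \<omega> = c"
proof -
  interpret F: finite_measure_subalgebra M F
    by (rule finite_measure_subalgebraI[OF sub])
  show ?thesis
  proof (rule F.real_cond_exp_charact)
    fix A assume A: "A \<in> sets F"
    then have "A \<in> sets M" using sub by (auto simp: subalgebra_def)
    then show "(\<integral>\<omega>\<in>A. exp (s * S \<omega>) \<partial>M) = (\<integral>\<omega>\<in>A. c \<partial>M)"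
      using mgf[OF A] by (simp add: set_lebesgue_integral_def mult.commute)
  qed (simp_all add: integrable_exp_mult_of_bounded[OF _ S_bound])
qed

lemma real_cond_exp_indicator_abs_ge_le:
  fixes S :: "'a \<Rightarrow> real"
  assumes sub: "subalgebra M F"
    and S [measurable]: "S \<in> borel_measurable M"
    and S_bound: "\<And>\<omega>. \<omega> \<in> space M \<Longrightarrow> \<bar>S \<omega>\<bar> \<le> B"
    and "q > 0"
    and mgf: "\<And>A s. A \<in> sets F \<Longrightarrow> s \<in> {q, - q} \<Longrightarrow>
                (\<integral>\<omega>. indicator A \<omega> * exp (s * S \<omega>) \<partial>M) = m s * measure M A"
  shows "AE \<omega> in M. real_cond_exp M F (indicator {\<omega> \<in> space M. t \<le> \<bar>S \<omega>\<bar>}) \<omega>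
           \<le> exp (- q * t) * (m q + m (- q))"
proof -
  interpret F: finite_measure_subalgebra M F
    by (rule finite_measure_subalgebraI[OF sub])
  have integrable: "integrable M (\<lambda>\<omega>. exp (s * S \<omega>))" for s
    by (rule integrable_exp_mult_of_bounded[OF _ S_bound]) simp
  have integrable_Z: "integrable M (\<lambda>\<omega>. exp (- q * t) * (exp (q * S \<omega>) + exp (- q * S \<omega>)))"
    by (intro integrable_mult_right Bochner_Integration.integrable_add integrable)
  have "AE \<omega> in M. real_cond_exp M F (indicator {\<omega> \<in> space M. t \<le> \<bar>S \<omega>\<bar>}) \<omega>
      \<le> real_cond_exp M F (\<lambda>\<omega>. exp (- q * t) * (exp (q * S \<omega>) + exp (- q * S \<omega>))) \<omega>"
  proof (rule F.real_cond_exp_mono[OF _ _ integrable_Z])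
    show "AE \<omega> in M. indicator {\<omega> \<in> space M. t \<le> \<bar>S \<omega>\<bar>} \<omega>
        \<le> exp (- q * t) * (exp (q * S \<omega>) + exp (- q * S \<omega>))"
      using indicator_abs_ge_le_exp[of q t] \<open>q > 0\<close> by (intro AE_I2) (force simp: indicator_def)
  qed (simp add: integrable_real_indicator less_top[symmetric])
  moreover have "AE \<omega> in M. real_cond_exp M F (\<lambda>\<omega>. exp (- q * t) * (exp (q * S \<omega>) + exp (- q * S \<omega>))) \<omega>
      = exp (- q * t) * real_cond_exp M F (\<lambda>\<omega>. exp (q * S \<omega>) + exp (- q * S \<omega>)) \<omega>"
    by (intro F.real_cond_exp_cmult Bochner_Integration.integrable_add integrable)
  moreover have "AE \<omega> in M. real_cond_exp M F (\<lambda>\<omega>. exp (q * S \<omega>) + exp (- q * S \<omega>)) \<omega>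
      = real_cond_exp M F (\<lambda>\<omega>. exp (q * S \<omega>)) \<omega> + real_cond_exp M F (\<lambda>\<omega>. exp (- q * S \<omega>)) \<omega>"
    by (intro F.real_cond_exp_add integrable)
  moreover have "AE \<omega> in M. real_cond_exp M F (\<lambda>\<omega>. exp (q * S \<omega>)) \<omega> = m q"
    by (rule real_cond_exp_exp_mult_eq_const[OF sub S], erule S_bound, rule mgf) simp_all
  moreover have "AE \<omega> in M. real_cond_exp M F (\<lambda>\<omega>. exp (- q * S \<omega>)) \<omega> = m (- q)"
    by (rule real_cond_exp_exp_mult_eq_const[OF sub S], erule S_bound, rule mgf) simp_all
  ultimately show ?thesis
    by eventually_elim simp
qed

lemma real_cond_exp_indicator_empty:
  assumes sub: "subalgebra M F"
  shows "AE \<omega> in M. real_cond_exp M F (indicator {}) \<omega> = 0"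
proof -
  interpret F: finite_measure_subalgebra M F
    by (rule finite_measure_subalgebraI[OF sub])
  have empty: "indicator {} = (\<lambda>_. 0 :: real)"
    by (simp add: fun_eq_iff)
  show ?thesis
    unfolding empty by (rule F.real_cond_exp_F_meas) simp_all
qed

lemma real_cond_exp_Psi_dev_ge_le:
  fixes \<alpha> :: "nat \<Rightarrow> 'a \<Rightarrow> complex"
  assumes "\<beta> > 0" "q > 0"
    and indep: "indep_vars (\<lambda>_. borel) \<alpha> UNIV"
    and rot_inv: "\<And>k c. cmod c = 1 \<Longrightarrow> distr M borel (\<lambda>\<omega>. c * \<alpha> k \<omega>) = distr M borel (\<alpha> k)"
    and law: "\<And>k. distributed M lborel (\<lambda>\<omega>. (cmod (\<alpha> k \<omega>))\<^sup>2)
                (\<lambda>x. ennreal (beta1_density (\<beta> * real (k + 1) / 2) x))"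
  shows "AE \<omega> in M. real_cond_exp M (filt M \<alpha> j) (indicator {\<omega> \<in> space M. t \<le> \<bar>Psi_dev \<alpha> \<theta> j l \<omega>\<bar>}) \<omega>
           \<le> 2 * exp (- q * t + 2 * q\<^sup>2 * (ln (1 + \<beta> * real l / (1 + \<beta> * real j)) / \<beta>))"
proof -
  define m where "m s = (\<Prod>i<l. \<integral>\<omega>. exp (s * (-2 * Im (Ln (1 - \<alpha> (j + i) \<omega>)))) \<partial>M)" for s
  define V where "V = ln (1 + \<beta> * real l / (1 + \<beta> * real j)) / \<beta>"
  have [measurable]: "\<alpha> i \<in> borel_measurable M" for i
    using indep unfolding indep_vars_def2 by auto
  have "Psi_dev \<alpha> \<theta> j l \<in> borel_measurable M"
    by (rule measurable_from_subalg[OF subalgebra_filt measurable_Psi_dev_filt]) simp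
  moreover have "subalgebra M (filt M \<alpha> j)"
    by (rule subalgebra_filt) simp
  ultimately have cond: "AE \<omega> in M. real_cond_exp M (filt M \<alpha> j)
      (indicator {\<omega> \<in> space M. t \<le> \<bar>Psi_dev \<alpha> \<theta> j l \<omega>\<bar>}) \<omega> \<le> exp (- q * t) * (m q + m (- q))"
    unfolding m_def
    by (intro real_cond_exp_indicator_abs_ge_le[OF _ _ abs_Psi_dev_le \<open>q > 0\<close>
          integral_indicator_exp_Psi_dev[OF indep rot_inv]])
  have mgf: "m s \<le> exp (2 * s\<^sup>2 * V)" for s
    unfolding m_def V_def
    by (rule prod_integral_exp_Im_Ln_le[OF \<open>\<beta> > 0\<close> _ rot_inv law]) simp
  have "exp (- q * t) * (m q + m (- q)) \<le> exp (- q * t) * (2 * exp (2 * q\<^sup>2 * V))"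
    using add_mono[OF mgf[of q] mgf[of "- q"]] by (intro mult_left_mono) simp_all
  also have "\<dots> = 2 * exp (- q * t + 2 * q\<^sup>2 * V)"
    by (simp only: exp_add mult.left_commute)
  finally show ?thesis
    using cond unfolding V_def by (auto elim!: eventually_mono)
qed

end

theorem proposition3p1:
  fixes M :: "'w measure" and j l :: nat and \<theta> t :: real and \<alpha> :: "nat \<Rightarrow> 'w \<Rightarrow> complex" and \<beta> :: real
  assumes "prob_space M"
    and "\<beta> > 0"
    and indep: "prob_space.indep_vars M (\<lambda>_. borel) \<alpha> UNIV"
    and rot_inv: "\<And>k c. cmod c = 1 \<Longrightarrow>
           distr M borel (\<lambda>\<omega>. c * \<alpha> k \<omega>) = distr M borel (\<alpha> k)"
    and beta_law: "\<And>k. distributed M lborel (\<lambda>\<omega>. (cmod (\<alpha> k \<omega>))\<^sup>2)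
           (\<lambda>x. ennreal (indicator {0..1} x * (\<beta> * real (k + 1) / 2)
                 * (1 - x) powr (\<beta> * real (k + 1) / 2 - 1)))"
    and "t > 0"
  shows "AE \<omega> in M.
           real_cond_exp M (filt M \<alpha> j)
             (indicator {\<omega>' \<in> space M.
                \<bar>Psi (\<lambda>r. \<alpha> r \<omega>') (j + l) \<theta> - Psi (\<lambda>r. \<alpha> r \<omega>') j \<theta> - real l * \<theta>\<bar> \<ge> t}) \<omega>
         \<le> (if l = 0 then 0
             else 2 * exp (- (t\<^sup>2 * \<beta> / (8 * ln (1 + \<beta> * real l / (1 + \<beta> * real j))))))"
proof -
  interpret prob_space M by fact
  have event: "{\<omega>' \<in> space M. \<bar>Psi (\<lambda>r. \<alpha> r \<omega>') (j + l) \<theta> - Psi (\<lambda>r. \<alpha> r \<omega>') j \<theta> - real l * \<theta>\<bar> \<ge> t}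
      = {\<omega> \<in> space M. t \<le> \<bar>Psi_dev \<alpha> \<theta> j l \<omega>\<bar>}"
    by (simp add: Psi_dev_def)
  show ?thesis
  proof (cases "l = 0")
    case True
    have "subalgebra M (filt M \<alpha> j)"
      using indep by (intro subalgebra_filt) (simp add: indep_vars_def2)
    from real_cond_exp_indicator_empty[OF this]
    have "AE \<omega> in M. real_cond_exp M (filt M \<alpha> j) (indicator {}) \<omega> \<le> 0"
      by eventually_elim simp
    moreover have empty: "{\<omega> \<in> space M. t \<le> \<bar>Psi_dev \<alpha> \<theta> j l \<omega>\<bar>} = {}"
      using True \<open>t > 0\<close> by simp
    ultimately show ?thesis
      unfolding event empty using True by simp
  next
    case False
    define L where "L = ln (1 + \<beta> * real l / (1 + \<beta> * real j))"
    have "L > 0"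
      using False \<open>\<beta> > 0\<close> by (simp add: L_def add_pos_nonneg)
    then have "t * \<beta> / (4 * L) > 0"
      using \<open>t > 0\<close> \<open>\<beta> > 0\<close> by simp
    from real_cond_exp_Psi_dev_ge_le[OF \<open>\<beta> > 0\<close> this indep rot_inv beta_law[folded beta1_density_def],
        of j t \<theta> l]
    show ?thesis
      unfolding event L_def[symmetric] chernoff_exponent_eq[OF \<open>L > 0\<close> \<open>\<beta> > 0\<close>] using False by simp
  qed
qed

end
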